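(* In the currency market model #2 described in the context, fix $t\in\mathbb T$ and assume that for every $B\in\mathcal H_t$ with $\mathbb P(B)>0$ there exists $B'\in\mathcal F$, $B'\subset B$, with $\mathbb P(B')>0$ such that on $B'$, for all $i,j,k\le d$, $1+\lambda^{ij}_t\le(1+\lambda^{ik}_t)(1+\lambda^{kj}_t)$ and $\lambda^{ij}_t+\lambda^{ji}_t>0$. Then $N^0_t(F)=\{0\}$.
   Context: Let $T\in\mathbb N$, $\mathbb T=\{0,\dots,T\}$, $d\ge1$, $(\Omega,\mathcal F,\mathbb P)$ a complete probability space and $\mathbb H=(\mathcal H_t)_{t\in\mathbb T}$ a filtration with $\mathcal H_T\subset\mathcal F$. $\mathbb M^d$ denotes real $d\times d$ matrices, $\mathbb M^d_+$ those with nonnegative entries; $L^0(E;\mathcal G)$ denotes $E$-valued $\mathcal G$-measurable random variables; equalities between random variables hold a.s. Let $S=(S_t)_{t\in\mathbb T}$ be an $\mathcal F$-measurable $(0,\infty)^d$-valued process and $\lambda=(\lambda_t)_{t\in\mathbb T}$ an $\mathcal F$-measurable $\mathbb M^d_+$-valued process (neither necessarily $\mathbb H$-adapted); set $\tau^{ij}_t=S^j_t/S^i_t$. For $\rho,\ell\in\mathbb M^d_+$ define $f(\cdot;\rho,\ell):\mathbb M^d\to\mathbb R^d$ by $f^i(a;\rho,\ell)=\sum_{j=1}^d a^{ji}\mathbf 1_{\{a^{ji}>0\}}-a^{ij}\rho^{ij}(1+\ell^{ij})\mathbf 1_{\{a^{ij}>0\}}$, $i\le d$. Set $\mathcal A=\mathbb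 M^d_+$ and $F_t(a)=f(a;\tau_t,\lambda_t)$, $t\in\mathbb T$. Let $N_t(F)=\{F_t(\eta):\eta\in L^0(\mathbb M^d_+;\mathcal H_t)\}$ and $N^0_t(F)=N_t(F)\cap(-N_t(F))$. *)

theory Defs
  imports "HOL-Probability.Probability"
begin

text \<open>Currency market model #2. Matrices in M^d are real^'d^'d, entry (i,j) is a $ i $ j.\<close>

definition fmap :: "real^'d^'d \<Rightarrow> real^'d^'d \<Rightarrow> real^'d^'d \<Rightarrow> real^'d" where
  "fmap \<rho> l a = (\<chi> i. \<Sum>j\<in>UNIV.
      (if a $ j $ i > 0 then a $ j $ i else 0)
    - (if a $ i $ j > 0 then a $ i $ j * \<rho> $ i $ j * (1 + l $ i $ j) else 0))"

definition tau :: "real^'d \<Rightarrow> real^'d^'d" where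
  "tau s = (\<chi> i j. s $ j / s $ i)"

definition Fmap :: "(nat \<Rightarrow> 'a \<Rightarrow> real^'d) \<Rightarrow> (nat \<Rightarrow> 'a \<Rightarrow> real^'d^'d) \<Rightarrow> nat \<Rightarrow> 'a \<Rightarrow> real^'d^'d \<Rightarrow> real^'d" where
  "Fmap S lam t \<omega> a = fmap (tau (S t \<omega>)) (lam t \<omega>) a"

text \<open>N_t(F): random vectors equal a.s. to F_t(eta) for some H_t-measurable M^d_+-valued eta.
  Random variables are identified up to a.s. equality, so N_t(F) is saturated under a.s. equality.\<close>
definition Nset :: "'a measure \<Rightarrow> (nat \<Rightarrow> 'a measure) \<Rightarrow> (nat \<Rightarrow> 'a \<Rightarrow> real^'d) \<Rightarrow> (nat \<Rightarrow> 'a \<Rightarrow> real^'d^'d) \<Rightarrow> nat \<Rightarrow> ('a \<Rightarrow> real^'d) set" where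
  "Nset M H S lam t = {X \<in> borel_measurable M. \<exists>\<eta> \<in> borel_measurable (H t).
      (\<forall>\<omega>\<in>space M. \<forall>i j. \<eta> \<omega> $ i $ j \<ge> 0) \<and>
      (AE \<omega> in M. X \<omega> = Fmap S lam t \<omega> (\<eta> \<omega>))}"

definition N0set :: "'a measure \<Rightarrow> (nat \<Rightarrow> 'a measure) \<Rightarrow> (nat \<Rightarrow> 'a \<Rightarrow> real^'d) \<Rightarrow> (nat \<Rightarrow> 'a \<Rightarrow> real^'d^'d) \<Rightarrow> nat \<Rightarrow> ('a \<Rightarrow> real^'d) set" where
  "N0set M H S lam t = {X. X \<in> Nset M H S lam t \<and> (\<lambda>\<omega>. - X \<omega>) \<in> Nset M H S lam t}"

definition zero_class :: "'a measure \<Rightarrow> ('a \<Rightarrow> real^'d) set" where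
  "zero_class M = {X \<in> borel_measurable M. AE \<omega> in M. X \<omega> = 0}"

end

theory Submission
  imports Defs
begin

text \<open>Call a pair \<open>(i,j)\<close> free if \<open>\<lambda>\<^sup>i\<^sup>j = 0\<close>. The triangle inequality makes free pairs transitive
  and \<open>\<lambda>\<^sup>i\<^sup>i > 0\<close> makes them irreflexive, so \<open>\<phi>(j) = #{k. (k,j) free}\<close> strictly increases along
  free pairs. If \<open>F(a) = 0\<close> for \<open>a \<ge> 0\<close>, pairing \<open>F(a)\<close> with the price vector \<open>S\<close> shows that \<open>a\<close>
  trades only along free pairs, and pairing it with \<open>(\<phi>(i) S\<^sup>i)\<^sub>i\<close> gives
  \<open>\<Sum> a\<^sup>i\<^sup>j S\<^sup>j (\<phi>(j) - \<phi>(i)) = 0\<close> with strictly positive terms where \<open>a\<^sup>i\<^sup>j > 0\<close>; hence \<open>a = 0\<close>.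
  Given \<open>X, -X \<in> N\<^sub>t(F)\<close> with strategies \<open>\<eta>\<^sub>1, \<eta>\<^sub>2\<close>, this applies to \<open>a = \<eta>\<^sub>1 + \<eta>\<^sub>2\<close> wherever the
  costs satisfy both conditions. The event \<open>{\<eta>\<^sub>1 \<noteq> 0}\<close> is \<open>\<H>\<^sub>t\<close>-measurable, so if it were not null
  the hypothesis would give a non-null subevent on which both conditions hold and hence \<open>\<eta>\<^sub>1 = 0\<close>
  almost surely, a contradiction. Thus \<open>X = F(0) = 0\<close> almost surely.\<close>

definition efficient_costs :: "real^'d^'d \<Rightarrow> bool" where
  "efficient_costs l \<longleftrightarrow> (\<forall>i j k.
     1 + l $ i $ j \<le> (1 + l $ i $ k) * (1 + l $ k $ j) \<and> l $ i $ j + l $ j $ i > 0)"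

lemma fmap_nonneg:
  assumes "\<forall>i j. a $ i $ j \<ge> 0"
  shows "fmap \<rho> l a $ i = (\<Sum>j\<in>UNIV. a $ j $ i - a $ i $ j * \<rho> $ i $ j * (1 + l $ i $ j))"
proof -
  have "(if a $ j $ i > 0 then a $ j $ i else 0) = a $ j $ i"
    and "(if a $ i $ j > 0 then a $ i $ j * \<rho> $ i $ j * (1 + l $ i $ j) else 0)
       = a $ i $ j * \<rho> $ i $ j * (1 + l $ i $ j)" for j
    using assms[rule_format, of j i] assms[rule_format, of i j] by auto
  then show ?thesis
    unfolding fmap_def by simp
qed

lemma fmap_zero [simp]: "fmap \<rho> l 0 = 0"
  by (simp add: fmap_def vec_eq_iff)

lemma fmap_add:
  assumes "\<forall>i j. a $ i $ j \<ge> 0" "\<forall>i j. b $ i $ j \<ge> 0"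
  shows "fmap \<rho> l (a + b) = fmap \<rho> l a + fmap \<rho> l b"
proof -
  have "\<forall>i j. (a + b) $ i $ j \<ge> 0" using assms by simp
  then show ?thesis
    by (simp add: vec_eq_iff fmap_nonneg assms sum.distrib[symmetric] algebra_simps
        sum_subtractf[symmetric])
qed

lemma sum_weighted_value_fmap_tau:
  fixes s :: "real^'d" and a l :: "real^'d^'d" and w :: "'d \<Rightarrow> real"
  assumes "\<forall>i. s $ i > 0" "\<forall>i j. a $ i $ j \<ge> 0"
  shows "(\<Sum>i\<in>UNIV. w i * s $ i * fmap (tau s) l a $ i)
       = (\<Sum>i\<in>UNIV. \<Sum>j\<in>UNIV. a $ i $ j * s $ j * (w j - w i * (1 + l $ i $ j)))"
proof -
  have "(\<Sum>i\<in>UNIV. w i * s $ i * fmap (tau s) l a $ i)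
      = (\<Sum>i\<in>UNIV. \<Sum>j\<in>UNIV. w i * s $ i * a $ j $ i)
      - (\<Sum>i\<in>UNIV. \<Sum>j\<in>UNIV. w i * a $ i $ j * s $ j * (1 + l $ i $ j))"
  proof -
    have "w i * s $ i * fmap (tau s) l a $ i
        = (\<Sum>j\<in>UNIV. w i * s $ i * a $ j $ i - w i * a $ i $ j * s $ j * (1 + l $ i $ j))" for i
    proof -
      have "s $ i \<noteq> 0" using assms(1) by (metis less_irrefl)
      then show ?thesis
        unfolding fmap_nonneg[OF assms(2)] sum_distrib_left
        by (intro sum.cong) (simp_all add: tau_def field_simps)
    qed
    then show ?thesis
      by (simp add: sum_subtractf)
  qed
  also have "(\<Sum>i\<in>UNIV. \<Sum>j\<in>UNIV. w i * s $ i * a $ j $ i)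
           = (\<Sum>i\<in>UNIV. \<Sum>j\<in>UNIV. w j * s $ j * a $ i $ j)"
    by (rule sum.swap)
  finally show ?thesis
    by (simp add: sum_subtractf[symmetric] algebra_simps)
qed

lemma double_sum_nonneg_eq_0_iff:
  fixes g :: "'i::finite \<Rightarrow> 'j::finite \<Rightarrow> real"
  assumes "\<And>i j. g i j \<ge> 0"
  shows "(\<Sum>i\<in>UNIV. \<Sum>j\<in>UNIV. g i j) = 0 \<longleftrightarrow> (\<forall>i j. g i j = 0)"
  using assms by (simp add: sum_nonneg_eq_0_iff sum_nonneg)

lemma card_predecessors_strict_mono:
  fixes R :: "'d::finite \<Rightarrow> 'd \<Rightarrow> bool"
  assumes "transp R" "irreflp R" "R i j"
  shows "card {k. R k i} < card {k. R k j}"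
proof (rule psubset_card_mono)
  show "{k. R k i} \<subset> {k. R k j}"
    using assms by (auto dest: transpD irreflpD)
qed simp

lemma fmap_tau_zero_trades_at_no_cost:
  fixes s :: "real^'d" and a l :: "real^'d^'d"
  assumes s_pos: "\<forall>i. s $ i > 0" and l_nonneg: "\<forall>i j. l $ i $ j \<ge> 0"
    and a_nonneg: "\<forall>i j. a $ i $ j \<ge> 0" and zero: "fmap (tau s) l a = 0"
    and trade: "a $ i $ j > 0"
  shows "l $ i $ j = 0"
proof -
  have "(\<Sum>i\<in>UNIV. \<Sum>j\<in>UNIV. a $ i $ j * s $ j * (1 - 1 * (1 + l $ i $ j))) = 0"
    using sum_weighted_value_fmap_tau[OF s_pos a_nonneg, of "\<lambda>_. 1" l] zero by simp
  then have "(\<Sum>i\<in>UNIV. \<Sum>j\<in>UNIV. a $ i $ j * s $ j * l $ i $ j) = 0"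
    by (simp add: sum_negf)
  then have "\<forall>i j. a $ i $ j * s $ j * l $ i $ j = 0"
    using assms by (simp add: double_sum_nonneg_eq_0_iff less_imp_le)
  then show ?thesis
    using trade s_pos by (metis mult_eq_0_iff less_irrefl)
qed

lemma fmap_tau_eq_0_imp_eq_0:
  fixes s :: "real^'d" and a l :: "real^'d^'d"
  assumes s_pos: "\<forall>i. s $ i > 0" and l_nonneg: "\<forall>i j. l $ i $ j \<ge> 0"
    and a_nonneg: "\<forall>i j. a $ i $ j \<ge> 0"
    and costs: "efficient_costs l" and zero: "fmap (tau s) l a = 0"
  shows "a = 0"
proof -
  have triangle: "\<forall>i j k. 1 + l $ i $ j \<le> (1 + l $ i $ k) * (1 + l $ k $ j)"
    and round_trip: "\<forall>i j. l $ i $ j + l $ j $ i > 0"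
    using costs by (auto simp: efficient_costs_def)
  define free where "free i j \<longleftrightarrow> l $ i $ j = 0" for i j
  define \<phi> where "\<phi> j = real (card {k. free k j})" for j
  have "transp free"
  proof (rule transpI)
    fix i j k assume "free i j" "free j k"
    moreover have "1 + l $ i $ k \<le> (1 + l $ i $ j) * (1 + l $ j $ k)"
      using triangle by blast
    ultimately show "free i k"
      using l_nonneg[rule_format, of i k] by (simp add: free_def)
  qed
  moreover have "irreflp free"
  proof (rule irreflpI)
    fix i show "\<not> free i i" using round_trip[rule_format, of i i] by (simp add: free_def)
  qed
  ultimately have \<phi>_less: "\<phi> i < \<phi> j" if "free i j" for i j
    using card_predecessors_strict_mono that unfolding \<phi>_def by simp
  have free_trade: "free i j" if "a $ i $ j > 0" for i j
    using fmap_tau_zero_trades_at_no_cost[OF s_pos l_nonneg a_nonneg zero that] by (simp add: free_def)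
  have term_eq: "a $ i $ j * s $ j * (\<phi> j - \<phi> i * (1 + l $ i $ j)) = a $ i $ j * s $ j * (\<phi> j - \<phi> i)"
    for i j
    using free_trade[of i j] a_nonneg[rule_format, of i j]
    by (cases "a $ i $ j = 0") (auto simp: free_def less_le)
  have term_pos: "a $ i $ j * s $ j * (\<phi> j - \<phi> i) > 0" if "a $ i $ j > 0" for i j
    using \<phi>_less[OF free_trade[OF that]] that s_pos by simp
  have term_nonneg: "a $ i $ j * s $ j * (\<phi> j - \<phi> i) \<ge> 0" for i j
    using term_pos[of i j] a_nonneg[rule_format, of i j] by (cases "a $ i $ j = 0") (auto simp: less_le)
  have "(\<Sum>i\<in>UNIV. \<Sum>j\<in>UNIV. a $ i $ j * s $ j * (\<phi> j - \<phi> i)) = 0"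
    using sum_weighted_value_fmap_tau[OF s_pos a_nonneg, of \<phi> l] zero by (simp add: term_eq)
  then have "\<forall>i j. a $ i $ j * s $ j * (\<phi> j - \<phi> i) = 0"
    by (simp add: double_sum_nonneg_eq_0_iff term_nonneg)
  then have "\<not> a $ i $ j > 0" for i j
    using term_pos[of i j] by (metis less_irrefl)
  then show ?thesis
    using a_nonneg by (auto simp: vec_eq_iff not_less intro: order.antisym)
qed

lemma fmap_tau_opposite_imp_eq_0:
  fixes s :: "real^'d" and a b l :: "real^'d^'d"
  assumes s_pos: "\<forall>i. s $ i > 0" and l_nonneg: "\<forall>i j. l $ i $ j \<ge> 0"
    and a_nonneg: "\<forall>i j. a $ i $ j \<ge> 0" and b_nonneg: "\<forall>i j. b $ i $ j \<ge> 0"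
    and costs: "efficient_costs l" and opposite: "fmap (tau s) l a = - fmap (tau s) l b"
  shows "a = 0"
proof -
  have sum_zero: "fmap (tau s) l (a + b) = 0"
    using opposite by (simp add: fmap_add a_nonneg b_nonneg)
  have "a + b = 0"
    by (rule fmap_tau_eq_0_imp_eq_0[OF s_pos l_nonneg _ costs sum_zero]) (use a_nonneg b_nonneg in simp)
  then show ?thesis
    using a_nonneg b_nonneg by (simp add: vec_eq_iff add_nonneg_eq_0_iff)
qed

lemma (in finite_measure) AE_not_in_if_positive_subsets:
  assumes B: "B \<in> sets M"
    and subset: "measure M B > 0 \<Longrightarrow> \<exists>B'\<in>sets M. B' \<subseteq> B \<and> measure M B' > 0 \<and> (\<forall>\<omega>\<in>B'. Q \<omega>)"
    and AE_Q: "AE \<omega> in M. Q \<omega> \<longrightarrow> \<omega> \<notin> B"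
  shows "AE \<omega> in M. \<omega> \<notin> B"
proof (rule ccontr)
  assume "\<not> (AE \<omega> in M. \<omega> \<notin> B)"
  then have "measure M B > 0"
    using B by (auto simp: AE_iff_null_sets[symmetric] emeasure_eq_measure less_le)
  then obtain B' where B': "B' \<in> sets M" "B' \<subseteq> B" "measure M B' > 0" "\<forall>\<omega>\<in>B'. Q \<omega>"
    using subset by blast
  have "AE \<omega> in M. \<omega> \<notin> B'"
    using AE_Q by eventually_elim (use B' in auto)
  then have "measure M B' = 0"
    using B' by (simp add: AE_iff_null_sets[symmetric] measure_eq_0_null_sets)
  with B' show False by simp
qed

lemma zero_class_subset_N0set:
  fixes S :: "nat \<Rightarrow> 'a \<Rightarrow> real^'d" and lam :: "nat \<Rightarrow> 'a \<Rightarrow> real^'d^'d"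
  shows "zero_class M \<subseteq> N0set M H S lam t"
proof -
  have "Y \<in> Nset M H S lam t" if "Y \<in> zero_class M" for Y
    using that unfolding zero_class_def Nset_def
    by (intro CollectI conjI bexI[where x = "\<lambda>_. 0"]) (auto simp: Fmap_def)
  moreover have "(\<lambda>\<omega>. - Y \<omega>) \<in> zero_class M" if "Y \<in> zero_class M" for Y :: "'a \<Rightarrow> real^'d"
    using that unfolding zero_class_def by auto
  ultimately show ?thesis
    unfolding N0set_def by blast
qed

lemma N0set_subset_zero_class:
  assumes "finite_measure M" and "subalgebra M (H t)"
    and S_pos: "\<And>\<omega> i. \<omega> \<in> space M \<Longrightarrow> S t \<omega> $ i > 0"
    and lam_nonneg: "\<And>\<omega> i j. \<omega> \<in> space M \<Longrightarrow> lam t \<omega> $ i $ j \<ge> 0"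
    and efficient_subsets: "\<And>B. B \<in> sets (H t) \<Longrightarrow> measure M B > 0 \<Longrightarrow>
       \<exists>B'\<in>sets M. B' \<subseteq> B \<and> measure M B' > 0 \<and> (\<forall>\<omega>\<in>B'. efficient_costs (lam t \<omega>))"
  shows "N0set M H S lam t \<subseteq> zero_class M"
proof
  interpret finite_measure M by fact
  have sets_H: "sets (H t) \<subseteq> sets M" and space_H: "space (H t) = space M"
    using \<open>subalgebra M (H t)\<close> by (auto simp: subalgebra_def)
  fix X assume "X \<in> N0set M H S lam t"
  then obtain \<eta>\<^sub>1 \<eta>\<^sub>2 where X_meas: "X \<in> borel_measurable M" and \<eta>\<^sub>1_meas: "\<eta>\<^sub>1 \<in> borel_measurable (H t)"
    and \<eta>_nonneg: "\<forall>\<omega>\<in>space M. \<forall>i j. \<eta>\<^sub>1 \<omega> $ i $ j \<ge> 0" "\<forall>\<omega>\<in>space M. \<forall>i j. \<eta>\<^sub>2 \<omega> $ i $ j \<ge> 0"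
    and X_eq: "AE \<omega> in M. X \<omega> = Fmap S lam t \<omega> (\<eta>\<^sub>1 \<omega>)"
    and neg_X_eq: "AE \<omega> in M. - X \<omega> = Fmap S lam t \<omega> (\<eta>\<^sub>2 \<omega>)"
    unfolding N0set_def Nset_def by blast
  define B where "B = {\<omega> \<in> space (H t). \<eta>\<^sub>1 \<omega> \<noteq> 0}"
  have B: "B \<in> sets (H t)"
    unfolding B_def using \<eta>\<^sub>1_meas by measurable
  have "AE \<omega> in M. efficient_costs (lam t \<omega>) \<longrightarrow> \<omega> \<notin> B"
    using X_eq neg_X_eq AE_space
  proof eventually_elim
    case (elim \<omega>)
    have "\<eta>\<^sub>1 \<omega> = 0" if "efficient_costs (lam t \<omega>)"
    proof (rule fmap_tau_opposite_imp_eq_0[OF _ _ _ _ that])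
      show "fmap (tau (S t \<omega>)) (lam t \<omega>) (\<eta>\<^sub>1 \<omega>) = - fmap (tau (S t \<omega>)) (lam t \<omega>) (\<eta>\<^sub>2 \<omega>)"
        using elim(1,2) unfolding Fmap_def by (metis minus_minus)
    qed (use S_pos lam_nonneg \<eta>_nonneg elim(3) in auto)
    then show ?case by (simp add: B_def)
  qed
  then have "AE \<omega> in M. \<omega> \<notin> B"
    using efficient_subsets B sets_H by (intro AE_not_in_if_positive_subsets) auto
  then have "AE \<omega> in M. X \<omega> = 0"
    using X_eq AE_space by eventually_elim (simp add: B_def space_H Fmap_def)
  with X_meas show "X \<in> zero_class M"
    by (simp add: zero_class_def)
qed

theorem mainTheorem10:
  fixes M :: "'a measure" and H :: "nat \<Rightarrow> 'a measure" and T t :: nat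
    and S :: "nat \<Rightarrow> 'a \<Rightarrow> real^'d" and lam :: "nat \<Rightarrow> 'a \<Rightarrow> real^'d^'d"
  assumes prob: "prob_space M"
    and complete: "complete_measure M"
    and filt_sub: "\<And>s. s \<le> T \<Longrightarrow> subalgebra M (H s)"
    and filt_mono: "\<And>r s. r \<le> s \<Longrightarrow> s \<le> T \<Longrightarrow> sets (H r) \<subseteq> sets (H s)"
    and S_meas: "\<And>s. s \<le> T \<Longrightarrow> S s \<in> borel_measurable M"
    and S_pos: "\<And>s \<omega> i. s \<le> T \<Longrightarrow> \<omega> \<in> space M \<Longrightarrow> S s \<omega> $ i > 0"
    and lam_meas: "\<And>s. s \<le> T \<Longrightarrow> lam s \<in> borel_measurable M"
    and lam_nonneg: "\<And>s \<omega> i j. s \<le> T \<Longrightarrow> \<omega> \<in> space M \<Longrightarrow> lam s \<omega> $ i $ j \<ge> 0"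
    and tT: "t \<le> T"
    and hyp: "\<forall>B \<in> sets (H t). measure M B > 0 \<longrightarrow>
       (\<exists>B' \<in> sets M. B' \<subseteq> B \<and> measure M B' > 0 \<and>
          (\<forall>\<omega>\<in>B'. \<forall>i j k.
             1 + lam t \<omega> $ i $ j \<le> (1 + lam t \<omega> $ i $ k) * (1 + lam t \<omega> $ k $ j) \<and>
             lam t \<omega> $ i $ j + lam t \<omega> $ j $ i > 0))"
  shows "N0set M H S lam t = zero_class M"
proof -
  have "N0set M H S lam t \<subseteq> zero_class M"
  proof (rule N0set_subset_zero_class)
    show "finite_measure M"
      using prob by (rule prob_space.axioms(1))
    show "subalgebra M (H t)"
      using filt_sub tT .
    show "S t \<omega> $ i > 0" "lam t \<omega> $ i $ j \<ge> 0" if "\<omega> \<in> space M" for \<omega> i j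
      using S_pos lam_nonneg tT that by auto
    show "\<exists>B'\<in>sets M. B' \<subseteq> B \<and> measure M B' > 0 \<and> (\<forall>\<omega>\<in>B'. efficient_costs (lam t \<omega>))"
      if "B \<in> sets (H t)" "measure M B > 0" for B
      using hyp that by (simp add: efficient_costs_def)
  qed
  with zero_class_subset_N0set show ?thesis by blast
qed

end
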